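(* Let $p\in\mathbb{R}$ and $K:=\{z=(v,m,\sigma,e)\in Z: v\otimes v-\sigma=e\,\mathrm{Id},\ m=(e+p)v\}$. For any $z_1,z_2\in K$ with $z_1\ne z_2$ one has $z_2-z_1\in\Lambda$.
   Context: $\mathcal S_0^{2\times2}$ is the space of traceless symmetric $2\times2$ matrices, $Z:=\mathbb{R}^2\times\mathbb{R}^2\times\mathcal S_0^{2\times2}\times\mathbb{R}$. The wave cone is $\Lambda=\{\bar z=(\bar v,\bar m,\bar\sigma,\bar e)\in Z:\ (\bar v,\bar e)\neq0\text{ and there is }0\ne(\xi,c)\in\mathbb{R}^2\times\mathbb{R}\text{ with }(\bar\sigma+\bar e\,\mathrm{Id})\xi+c\bar v=0,\ \bar v\cdot\xi=0,\ \bar m\cdot\xi+c\bar e=0\}$. *)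

theory Defs
  imports "HOL-Analysis.Analysis"
begin

type_synonym zvec = "(real^2) \<times> (real^2) \<times> (real^2^2) \<times> real"

definition in_Z :: "zvec \<Rightarrow> bool" where
  "in_Z z = (case z of (v, m, \<sigma>, e) \<Rightarrow> transpose \<sigma> = \<sigma> \<and> trace \<sigma> = 0)"

definition outer :: "real^2 \<Rightarrow> real^2 \<Rightarrow> real^2^2" where
  "outer a b = (\<chi> i j. a $ i * b $ j)"

definition K_set :: "real \<Rightarrow> zvec set" where
  "K_set p = {z. in_Z z \<and> (case z of (v, m, \<sigma>, e) \<Rightarrow>
      outer v v - \<sigma> = e *\<^sub>R mat 1 \<and> m = (e + p) *\<^sub>R v)}"

definition wave_cone :: "zvec set" where
  "wave_cone = {z. in_Z z \<and> (case z of (v, m, \<sigma>, e) \<Rightarrow>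
      (v, e) \<noteq> (0, 0) \<and>
      (\<exists>\<xi> :: real^2. \<exists>c :: real. (\<xi>, c) \<noteq> (0, 0) \<and>
         (\<sigma> + e *\<^sub>R mat 1) *v \<xi> + c *\<^sub>R v = 0 \<and>
         v \<bullet> \<xi> = 0 \<and> m \<bullet> \<xi> + c * e = 0))}"

end

theory Submission
  imports Defs
begin

text \<open>The trace condition forces \<open>e = |v|\<^sup>2/2\<close>, so a point of \<open>K\<close> is determined by
  its velocity \<open>v\<close>, and two distinct points have distinct velocities \<open>v\<^sub>1 \<noteq> v\<^sub>2\<close>.
  Take \<open>\<xi>\<close> to be \<open>v\<^sub>2 - v\<^sub>1\<close> rotated by a right angle. Then \<open>v\<^sub>1 \<bullet> \<xi> = v\<^sub>2 \<bullet> \<xi> =: a\<close>,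
  so \<open>(\<sigma>\<^sub>2 - \<sigma>\<^sub>1 + (e\<^sub>2 - e\<^sub>1) Id) \<xi> = (v\<^sub>2 \<otimes> v\<^sub>2 - v\<^sub>1 \<otimes> v\<^sub>1) \<xi> = a (v\<^sub>2 - v\<^sub>1)\<close> and
  \<open>(m\<^sub>2 - m\<^sub>1) \<bullet> \<xi> = a (e\<^sub>2 - e\<^sub>1)\<close>; hence \<open>c = -a\<close> works.\<close>

definition K_point :: "real \<Rightarrow> real^2 \<Rightarrow> zvec" where
  "K_point p v = (let e = (v \<bullet> v) / 2 in (v, (e + p) *\<^sub>R v, outer v v - e *\<^sub>R mat 1, e))"

definition perp :: "real^2 \<Rightarrow> real^2" where
  "perp d = (\<chi> i. if i = 1 then - d$2 else d$1)"

lemma transpose_outer: "transpose (outer a b) = outer b a"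
  by (simp add: transpose_def outer_def vec_eq_iff)

lemma transpose_diff: "transpose (A - B) = transpose A - transpose (B :: 'a::ab_group_add^'n^'m)"
  by (simp add: transpose_def vec_eq_iff)

lemma trace_scaleR: "trace (c *\<^sub>R A) = c * trace (A :: real^'n^'n)"
  by (simp add: trace_def sum_distrib_left)

lemma trace_outer: "trace (outer a b) = a \<bullet> b"
  by (simp add: trace_def outer_def inner_vec_def)

lemma outer_mult_vec: "outer a b *v x = (b \<bullet> x) *\<^sub>R a"
  by (simp add: outer_def matrix_vector_mult_def inner_vec_def vec_eq_iff
      sum_distrib_left algebra_simps)

lemma outer_self_diff_mult_vec_orthogonal:
  assumes "(v2 - v1) \<bullet> \<xi> = 0"
  shows "(outer v2 v2 - outer v1 v1) *v \<xi> = (v1 \<bullet> \<xi>) *\<^sub>R (v2 - v1)"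
proof -
  have "v2 \<bullet> \<xi> = v1 \<bullet> \<xi>"
    using assms by (simp add: inner_diff_left)
  then show ?thesis
    by (simp add: matrix_vector_mult_diff_rdistrib outer_mult_vec scaleR_diff_right)
qed

lemma inner_perp_self: "d \<bullet> perp d = 0"
  by (simp add: perp_def inner_vec_def sum_2)

lemma perp_eq_0_iff: "perp d = 0 \<longleftrightarrow> d = 0"
  by (auto simp: perp_def vec_eq_iff forall_2)

lemma in_Z_diff:
  assumes "in_Z z1" and "in_Z z2"
  shows "in_Z (z2 - z1)"
  using assms by (cases z1, cases z2) (simp add: in_Z_def trace_sub transpose_diff)

lemma K_point_in_K_set: "K_point p v \<in> K_set p"
  by (simp add: K_point_def Let_def K_set_def in_Z_def transpose_diff transpose_outer
      transpose_scalar trace_sub trace_scaleR trace_outer trace_I)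

lemma K_set_eq_K_point:
  assumes "z \<in> K_set p"
  shows "z = K_point p (fst z)"
proof -
  obtain v m \<sigma> e where z: "z = (v, m, \<sigma>, e)"
    by (cases z) auto
  have \<sigma>: "\<sigma> = outer v v - e *\<^sub>R mat 1" and m: "m = (e + p) *\<^sub>R v" and "trace \<sigma> = 0"
    using assms by (auto simp: z K_set_def in_Z_def algebra_simps)
  then have e: "(v \<bullet> v) / 2 = e"
    by (simp add: trace_sub trace_scaleR trace_outer trace_I)
  show ?thesis
    by (simp only: z \<sigma> m K_point_def Let_def e fst_conv)
qed

lemma K_point_diff_in_wave_cone:
  assumes "v1 \<noteq> v2"
  shows "K_point p v2 - K_point p v1 \<in> wave_cone"
proof -
  define \<xi> where "\<xi> = perp (v2 - v1)"
  define c where "c = - (v1 \<bullet> \<xi>)"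
  have orth: "(v2 - v1) \<bullet> \<xi> = 0"
    by (simp add: \<xi>_def inner_perp_self)
  have "\<xi> \<noteq> 0"
    using assms by (simp add: \<xi>_def perp_eq_0_iff)
  moreover have "(outer v2 v2 - outer v1 v1) *v \<xi> + c *\<^sub>R (v2 - v1) = 0"
    by (simp add: outer_self_diff_mult_vec_orthogonal[OF orth] c_def)
  moreover have "v2 \<bullet> \<xi> = v1 \<bullet> \<xi>"
    using orth by (simp add: inner_diff_left)
  moreover have "in_Z (K_point p v2 - K_point p v1)"
    using K_point_in_K_set by (auto simp: K_set_def intro: in_Z_diff)
  ultimately show ?thesis
    using assms orth
    by (auto simp: wave_cone_def K_point_def Let_def c_def inner_diff_left
        inner_scaleR_left algebra_simps intro!: exI[of _ \<xi>] exI[of _ c])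
qed

theorem lemma2p3:
  fixes p :: real and z1 z2 :: zvec
  assumes "z1 \<in> K_set p" and "z2 \<in> K_set p" and "z1 \<noteq> z2"
  shows "z2 - z1 \<in> wave_cone"
proof -
  have "z1 = K_point p (fst z1)" and "z2 = K_point p (fst z2)"
    using assms(1,2) by (simp_all add: K_set_eq_K_point)
  moreover from this have "fst z1 \<noteq> fst z2"
    using assms(3) by metis
  ultimately show ?thesis
    by (metis K_point_diff_in_wave_cone)
qed

end
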